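(* Let $n\ge 1$, $G=\langle a_1,b_1,\ldots,a_n,b_n \mid p_1p_2\cdots p_n\rangle$ with $p_i=a_ib_ia_i^{-1}b_i^{-1}$, $p=p_1\cdots p_n$, and let $P$ be the free resolution $0\to P_2\xrightarrow{d_2}P_1\xrightarrow{d_1}P_0\xrightarrow{\varepsilon}\mathbb{Z}\to0$ of $\mathbb{Z}$ over $\mathbb{Z}G$ with $P_0=\mathbb{Z}G\,x$, $P_1$ free on $y_1,\ldots,y_n,z_1,\ldots,z_n$, $P_2=\mathbb{Z}G\,w$, $\varepsilon(x)=1$, $d_1(y_i)=(a_i-1)x$, $d_1(z_i)=(b_i-1)x$, $d_2(w)=\sum_{i=1}^n\bigl(\frac{\partial p}{\partial a_i}y_i+\frac{\partial p}{\partial b_i}z_i\bigr)$. Then there is a diagonal approximation $\Delta\colon P\to P\otimes P$ such that \begin{align*} &\Delta_0(x)=x\otimes x,\qquad \Delta_1(y_i)=y_i\otimes a_ix+x\otimes y_i,\qquad \Delta_1(z_i)=z_i\otimes b_ix+x\otimes z_i,\\ &\Delta_{02}(w)=x\otimes w, \end{align*} and \begin{align*} \Delta_{11}(w)={}&\sum_{i=1}^n\Bigl[\sum_{j=1}^{i-1}(p_1\cdots p_{j-1})(1-a_jb_ja_j^{-1})y_j\otimes(p_1\cdots p_{i-1})y_i\\ &\qquad+\sum_{j=1}^{i-1}(p_1\cdots p_{j-1})a_j(1-b_ja_j^{-1}b_j^{-1})z_j\otimes(p_1\cdots p_{i-1})y_i\Bigr]\\ &-\sum_{i=1}^{n-1}\Bigl[\sum_{j=1}^{i-1}\Bigl((p_1\cdots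 p_{j-1})(1-a_jb_ja_j^{-1})y_j\otimes(p_1\cdots p_{i-1})a_ib_ia_i^{-1}y_i\\ &\qquad\qquad+(p_1\cdots p_{j-1})a_j(1-b_ja_j^{-1}b_j^{-1})z_j\otimes(p_1\cdots p_{i-1})a_ib_ia_i^{-1}y_i\Bigr)\\ &\qquad+(p_1\cdots p_{i-1})(1-a_ib_ia_i^{-1})y_i\otimes(p_1\cdots p_{i-1})a_ib_ia_i^{-1}y_i\\ &\qquad+(p_1\cdots p_{i-1})a_iz_i\otimes(p_1\cdots p_{i-1})a_ib_ia_i^{-1}y_i\Bigr]\\ &+\sum_{i=1}^{n}\Bigl[\sum_{j=1}^{i-1}\Bigl((p_1\cdots p_{j-1})(1-a_jb_ja_j^{-1})y_j\otimes(p_1\cdots p_{i-1})a_iz_i\\ &\qquad\qquad+(p_1\cdots p_{j-1})a_j(1-b_ja_j^{-1}b_j^{-1})z_j\otimes(p_1\cdots p_{i-1})a_iz_i\Bigr)\\ &\qquad+(p_1\cdots p_{i-1})y_i\otimes(p_1\cdots p_{i-1})a_iz_i\Bigr]\\ &-\sum_{i=1}^{n-1}\Bigl[\sum_{j=1}^{i}\Bigl((p_1\cdots p_{j-1})(1-a_jb_ja_j^{-1})y_j\otimes(p_1\cdots p_i)z_i\\ &\qquad\qquad+(p_1\cdots p_{j-1})a_j(1-b_ja_j^{-1}b_j^{-1})z_j\otimes(p_1\cdots p_i)z_i\Bigr)\Bigr]\\ &-z_n\otimes b_ny_n. \end{align*}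
   Context: Fox derivatives: for a free group on generators $g_1,\dots,g_m$, $\partial/\partial g_i$ is the additive map with $\partial g_j/\partial g_i=\delta_{ij}$ and $\partial(uv)/\partial g_i=\partial u/\partial g_i+u\,\partial v/\partial g_i$, followed by passage to $\mathbb{Z}G$. The complex $P\otimes P$ has $(P\otimes P)_m=\bigoplus_{r+s=m}P_r\otimes_{\mathbb{Z}}P_s$, with $G$ acting diagonally, $g(u\otimes v)=gu\otimes gv$, differential $\partial(u\otimes v)=du\otimes v+(-1)^r u\otimes dv$ for $u\in P_r$, and augmentation $\varepsilon\otimes\varepsilon\colon P_0\otimes P_0\to\mathbb{Z}\otimes\mathbb{Z}\cong\mathbb{Z}$; it is again a free resolution of $\mathbb{Z}$ over $\mathbb{Z}G$. A diagonal approximation is a $\mathbb{Z}G$-chain map $\Delta\colon P\to P\otimes P$ with $(\varepsilon\otimes\varepsilon)\Delta_0=\varepsilon$. For $r+s=m$, $\Delta_{rs}\colon P_m\to P_r\otimes P_s$ denotes $\Delta_m$ followed by the projection onto the summand $P_r\otimes P_s$. Empty products $p_1\cdots p_0$ equal $1$, and empty sums are $0$. *)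

theory Defs
  imports Main "HOL-Library.Function_Algebras"
begin

text \<open>A letter (i, b, e): generator a_i (b = False) or b_i (b = True), inverted iff e.\<close>
type_synonym letter = "nat \<times> bool \<times> bool"
type_synonym word = "letter list"

definition letters :: "nat \<Rightarrow> letter set" where
  "letters n = {(i, b, e). 1 \<le> i \<and> i \<le> n}"

definition words :: "nat \<Rightarrow> word set" where
  "words n = lists (letters n)"

fun inv_letter :: "letter \<Rightarrow> letter" where
  "inv_letter (i, b, e) = (i, b, \<not> e)"

definition la :: "nat \<Rightarrow> letter" where "la i = (i, False, False)"
definition lb :: "nat \<Rightarrow> letter" where "lb i = (i, True, False)"
definition lai :: "nat \<Rightarrow> letter" where "lai i = (i, False, True)"
definition lbi :: "nat \<Rightarrow> letter" where "lbi i = (i, True, True)"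

definition comm :: "nat \<Rightarrow> word" where
  "comm i = [la i, lb i, lai i, lbi i]"

definition pw :: "nat \<Rightarrow> word" where
  "pw k = concat (map comm [1..<k+1])"

inductive step :: "nat \<Rightarrow> word \<Rightarrow> word \<Rightarrow> bool" for n where
  free: "\<lbrakk>u \<in> words n; v \<in> words n; l \<in> letters n\<rbrakk>
          \<Longrightarrow> step n (u @ [l, inv_letter l] @ v) (u @ v)"
| rel: "\<lbrakk>u \<in> words n; v \<in> words n\<rbrakk> \<Longrightarrow> step n (u @ pw n @ v) (u @ v)"

definition wequiv :: "nat \<Rightarrow> word \<Rightarrow> word \<Rightarrow> bool" where
  "wequiv n u v \<longleftrightarrow> u \<in> words n \<and> (\<lambda>x y. step n x y \<or> step n y x)\<^sup>*\<^sup>* u v"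

definition cls :: "nat \<Rightarrow> word \<Rightarrow> word set" where
  "cls n w = {v. wequiv n w v}"

definition Gcar :: "nat \<Rightarrow> word set set" where
  "Gcar n = cls n ` words n"

definition gmul :: "nat \<Rightarrow> word set \<Rightarrow> word set \<Rightarrow> word set" where
  "gmul n g h = cls n ((SOME u. u \<in> g) @ (SOME v. v \<in> h))"

datatype gen = X | Y nat | Z nat | W

fun deg :: "gen \<Rightarrow> nat" where
  "deg X = 0" | "deg (Y i) = 1" | "deg (Z i) = 1" | "deg W = 2"

fun valid_gen :: "nat \<Rightarrow> gen \<Rightarrow> bool" where
  "valid_gen n X = True"
| "valid_gen n (Y i) = (1 \<le> i \<and> i \<le> n)"
| "valid_gen n (Z i) = (1 \<le> i \<and> i \<le> n)"
| "valid_gen n W = True"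

text \<open>A cell (g, e) is the Z-basis element g e of P_r (g in G, e a free ZG-generator).\<close>
type_synonym cell = "word set \<times> gen"

definition cells :: "nat \<Rightarrow> nat \<Rightarrow> cell set" where
  "cells n r = {(g, e). g \<in> Gcar n \<and> valid_gen n e \<and> deg e = r}"

definition supp :: "('a \<Rightarrow> 'b::zero) \<Rightarrow> 'a set" where
  "supp f = {c. f c \<noteq> 0}"

definition Pmod :: "nat \<Rightarrow> nat \<Rightarrow> (cell \<Rightarrow> int) set" where
  "Pmod n r = {f. finite (supp f) \<and> supp f \<subseteq> cells n r}"

text \<open>(P \<otimes> P)_m = direct sum of P_r \<otimes>_Z P_s (r + s = m), realised as the free abelian
  group on pairs of cells.\<close>
definition PPmod :: "nat \<Rightarrow> nat \<Rightarrow> (cell \<times> cell \<Rightarrow> int) set" where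
  "PPmod n m = {F. finite (supp F) \<and>
     supp F \<subseteq> {(c, c'). \<exists>r s. c \<in> cells n r \<and> c' \<in> cells n s \<and> r + s = m}}"

definition bv :: "'a \<Rightarrow> 'a \<Rightarrow> int" where
  "bv c = (\<lambda>d. if d = c then 1 else 0)"

definition tens :: "('a \<Rightarrow> int) \<Rightarrow> ('b \<Rightarrow> int) \<Rightarrow> ('a \<times> 'b \<Rightarrow> int)" where
  "tens f f' = (\<lambda>(c, c'). f c * f' c')"

definition lext :: "('a \<Rightarrow> int) \<Rightarrow> ('a \<Rightarrow> 'b \<Rightarrow> int) \<Rightarrow> ('b \<Rightarrow> int)" where
  "lext f \<phi> = (\<lambda>d. \<Sum>c\<in>supp f. f c * \<phi> c d)"

definition act :: "nat \<Rightarrow> word set \<Rightarrow> (cell \<Rightarrow> int) \<Rightarrow> (cell \<Rightarrow> int)" where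
  "act n g f = lext f (\<lambda>(h, e). bv (gmul n g h, e))"

definition act2 :: "nat \<Rightarrow> word set \<Rightarrow> (cell \<times> cell \<Rightarrow> int) \<Rightarrow> (cell \<times> cell \<Rightarrow> int)" where
  "act2 n g F = lext F (\<lambda>((h, e), (h', e')). tens (bv (gmul n g h, e)) (bv (gmul n g h', e')))"

text \<open>Fox derivatives, as formal integer combinations of words.\<close>
fun fox_letter :: "nat \<times> bool \<Rightarrow> letter \<Rightarrow> (word \<times> int) list" where
  "fox_letter g (i, b, e) =
     (if (i, b) = g then (if e then [([(i, b, True)], -1)] else [([], 1)]) else [])"

fun fox :: "nat \<times> bool \<Rightarrow> word \<Rightarrow> (word \<times> int) list" where
  "fox g [] = []"
| "fox g (l # v) = fox_letter g l @ map (\<lambda>(u, k). (l # u, k)) (fox g v)"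

definition fcomb :: "nat \<Rightarrow> word set \<Rightarrow> (word \<times> int) list \<Rightarrow> gen \<Rightarrow> (cell \<Rightarrow> int)" where
  "fcomb n g ts e = (\<lambda>c. \<Sum>(u, k)\<leftarrow>ts. if c = (gmul n g (cls n u), e) then k else 0)"

text \<open>The differential of P on basis elements g e (d_1 in degree 1, d_2 in degree 2).
  Generator a_i is (i, False), b_i is (i, True).\<close>
fun dP :: "nat \<Rightarrow> cell \<Rightarrow> (cell \<Rightarrow> int)" where
  "dP n (g, X) = 0"
| "dP n (g, Y i) = bv (gmul n g (cls n [la i]), X) - bv (g, X)"
| "dP n (g, Z i) = bv (gmul n g (cls n [lb i]), X) - bv (g, X)"
| "dP n (g, W) = (\<Sum>i\<in>{1..n}. fcomb n g (fox (i, False) (pw n)) (Y i)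
                               + fcomb n g (fox (i, True) (pw n)) (Z i))"

definition dmap :: "nat \<Rightarrow> (cell \<Rightarrow> int) \<Rightarrow> (cell \<Rightarrow> int)" where
  "dmap n f = lext f (dP n)"

definition dPP :: "nat \<Rightarrow> (cell \<times> cell \<Rightarrow> int) \<Rightarrow> (cell \<times> cell \<Rightarrow> int)" where
  "dPP n F = lext F (\<lambda>(c, c'). tens (dP n c) (bv c')
                       + (\<lambda>t. (-1) ^ deg (snd c) * tens (bv c) (dP n c') t))"

definition eps :: "(cell \<Rightarrow> int) \<Rightarrow> int" where
  "eps f = (\<Sum>c\<in>supp f. if snd c = X then f c else 0)"

definition eps2 :: "(cell \<times> cell \<Rightarrow> int) \<Rightarrow> int" where
  "eps2 F = (\<Sum>cc\<in>supp F. if snd (fst cc) = X \<and> snd (snd cc) = X then F cc else 0)"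

definition proj :: "nat \<Rightarrow> nat \<Rightarrow> (cell \<times> cell \<Rightarrow> int) \<Rightarrow> (cell \<times> cell \<Rightarrow> int)" where
  "proj r s F = (\<lambda>(c, c'). if deg (snd c) = r \<and> deg (snd c') = s then F (c, c') else 0)"

definition ZG_linear :: "nat \<Rightarrow> nat \<Rightarrow> ((cell \<Rightarrow> int) \<Rightarrow> (cell \<times> cell \<Rightarrow> int)) \<Rightarrow> bool" where
  "ZG_linear n r D \<longleftrightarrow>
     (\<forall>f\<in>Pmod n r. D f \<in> PPmod n r) \<and>
     (\<forall>f\<in>Pmod n r. \<forall>f'\<in>Pmod n r. D (f + f') = D f + D f') \<and>
     (\<forall>g\<in>Gcar n. \<forall>f\<in>Pmod n r. D (act n g f) = act2 n g (D f))"

text \<open>A diagonal approximation P \<rightarrow> P \<otimes> P (P is concentrated in degrees 0,1,2, so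
  \<Delta>_m = 0 for m > 2 and the chain-map conditions above degree 2 are trivial).\<close>
definition diag_approx :: "nat \<Rightarrow> ((cell \<Rightarrow> int) \<Rightarrow> (cell \<times> cell \<Rightarrow> int))
    \<Rightarrow> ((cell \<Rightarrow> int) \<Rightarrow> (cell \<times> cell \<Rightarrow> int)) \<Rightarrow> ((cell \<Rightarrow> int) \<Rightarrow> (cell \<times> cell \<Rightarrow> int)) \<Rightarrow> bool" where
  "diag_approx n D0 D1 D2 \<longleftrightarrow>
     ZG_linear n 0 D0 \<and> ZG_linear n 1 D1 \<and> ZG_linear n 2 D2 \<and>
     (\<forall>f\<in>Pmod n 1. dPP n (D1 f) = D0 (dmap n f)) \<and>
     (\<forall>f\<in>Pmod n 2. dPP n (D2 f) = D1 (dmap n f)) \<and>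
     (\<forall>f\<in>Pmod n 0. eps2 (D0 f) = eps f)"

definition ev :: "nat \<Rightarrow> word \<Rightarrow> gen \<Rightarrow> (cell \<Rightarrow> int)" where
  "ev n u e = bv (cls n u, e)"

definition Aterm :: "nat \<Rightarrow> nat \<Rightarrow> (cell \<Rightarrow> int)" where
  "Aterm n j = ev n (pw (j - 1)) (Y j) - ev n (pw (j - 1) @ [la j, lb j, lai j]) (Y j)"

definition Bterm :: "nat \<Rightarrow> nat \<Rightarrow> (cell \<Rightarrow> int)" where
  "Bterm n j = ev n (pw (j - 1) @ [la j]) (Z j) - ev n (pw (j - 1) @ [la j, lb j, lai j, lbi j]) (Z j)"

definition Delta11 :: "nat \<Rightarrow> (cell \<times> cell \<Rightarrow> int)" where
  "Delta11 n =
     (\<Sum>i=1..n. \<Sum>j\<in>{1..<i}.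
        tens (Aterm n j) (ev n (pw (i - 1)) (Y i))
      + tens (Bterm n j) (ev n (pw (i - 1)) (Y i)))
   - (\<Sum>i\<in>{1..<n}.
        (\<Sum>j\<in>{1..<i}.
           tens (Aterm n j) (ev n (pw (i - 1) @ [la i, lb i, lai i]) (Y i))
         + tens (Bterm n j) (ev n (pw (i - 1) @ [la i, lb i, lai i]) (Y i)))
      + tens (Aterm n i) (ev n (pw (i - 1) @ [la i, lb i, lai i]) (Y i))
      + tens (ev n (pw (i - 1) @ [la i]) (Z i)) (ev n (pw (i - 1) @ [la i, lb i, lai i]) (Y i)))
   + (\<Sum>i=1..n.
        (\<Sum>j\<in>{1..<i}.
           tens (Aterm n j) (ev n (pw (i - 1) @ [la i]) (Z i))
         + tens (Bterm n j) (ev n (pw (i - 1) @ [la i]) (Z i)))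
      + tens (ev n (pw (i - 1)) (Y i)) (ev n (pw (i - 1) @ [la i]) (Z i)))
   - (\<Sum>i\<in>{1..<n}. \<Sum>j=1..i.
        tens (Aterm n j) (ev n (pw i) (Z i))
      + tens (Bterm n j) (ev n (pw i) (Z i)))
   - tens (ev n [] (Z n)) (ev n [lb n] (Y n))"

end

theory Submission
  imports Defs
begin

text \<open>
  The diagonal approximation is prescribed on the free generators: x, y_i, z_i as in the
  statement, and w \<mapsto> w \<otimes> (p_1\<cdots>p_{n-1} a_n b_n) x + x \<otimes> w + \<Delta>_11(w); it is then extended
  ZG-linearly, which makes it equivariant. For w, write
  d w = T_1 + \<dots> + T_n with T_i = (\<partial>p/\<partial>a_i) y_i + (\<partial>p/\<partial>b_i) z_i and S_i = T_1 + \<dots> + T_{i-1}.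
  Then \<Delta>_11(w) splits into blocks G_1, \<dots>, G_{n-1} and a last block H such that
  \<partial>G_i = S_i \<otimes> q_i x - S_{i+1} \<otimes> q_{i+1} x - x \<otimes> T_i + \<Delta>(T_i) with q_i = p_1\<cdots>p_{i-1};
  these telescope, and the relator p_1\<cdots>p_n = 1 closes the sum up with H.
\<close>

section \<open>The surface group\<close>

lemma letters_iff [simp]: "l \<in> letters n \<longleftrightarrow> 1 \<le> fst l \<and> fst l \<le> n"
  by (cases l) (auto simp: letters_def)

lemma words_append [simp]: "u @ v \<in> words n \<longleftrightarrow> u \<in> words n \<and> v \<in> words n"
  and words_Cons [simp]: "l # v \<in> words n \<longleftrightarrow> l \<in> letters n \<and> v \<in> words n"
  and words_Nil [simp]: "[] \<in> words n"
  by (auto simp: words_def)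

lemma fst_letter [simp]: "fst (la i) = i" "fst (lb i) = i" "fst (lai i) = i" "fst (lbi i) = i"
  by (auto simp: la_def lb_def lai_def lbi_def)

lemma inv_letter_simps [simp]:
  "inv_letter (la i) = lai i" "inv_letter (lai i) = la i"
  "inv_letter (lb i) = lbi i" "inv_letter (lbi i) = lb i"
  by (auto simp: la_def lb_def lai_def lbi_def)

lemma comm_words [simp]: "comm i \<in> words n \<longleftrightarrow> 1 \<le> i \<and> i \<le> n"
  by (auto simp: comm_def)

lemma pw_0 [simp]: "pw 0 = []"
  and pw_Suc: "pw (Suc k) = pw k @ comm (Suc k)"
  by (simp_all add: pw_def)

lemma pw_words [simp]: "k \<le> n \<Longrightarrow> pw k \<in> words n"
  by (induction k) (auto simp: pw_Suc)

lemma pw_snoc_comm: "1 \<le> i \<Longrightarrow> pw i = pw (i - 1) @ [la i, lb i, lai i, lbi i]"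
  using pw_Suc[of "i - 1"] by (simp add: comm_def)

lemma step_words: "step n x y \<Longrightarrow> x \<in> words n \<and> y \<in> words n"
  by (induction rule: step.induct) auto

lemma wequiv_iff_equivclp: "wequiv n u v \<longleftrightarrow> u \<in> words n \<and> equivclp (step n) u v"
  by (simp add: wequiv_def equivclp_def symclp_def [abs_def])

lemma equivclp_step_words: "equivclp (step n) x y \<Longrightarrow> x \<in> words n \<Longrightarrow> y \<in> words n"
  unfolding equivclp_def
  by (induction rule: rtranclp_induct) (auto elim: symclpE dest: step_words)

lemma equivclp_step_append:
  assumes "equivclp (step n) x y" "w \<in> words n" "w' \<in> words n"
  shows "equivclp (step n) (w @ x @ w') (w @ y @ w')"
proof -
  have "step n (w @ x' @ w') (w @ y' @ w')" if "step n x' y'" for x' y'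
    using that assms(2,3)
  proof (induction rule: step.induct)
    case (free u v l)
    then show ?case using step.free[of "w @ u" n "v @ w'" l] by simp
  next
    case (rel u v)
    then show ?case using step.rel[of "w @ u" n "v @ w'"] by simp
  qed
  with assms(1) show ?thesis
    unfolding equivclp_def
    by (induction rule: rtranclp_induct) (auto elim!: symclpE intro: rtranclp.rtrancl_into_rtrancl)
qed

lemma wequiv_sym: "wequiv n u v \<Longrightarrow> wequiv n v u"
  and wequiv_trans: "wequiv n u v \<Longrightarrow> wequiv n v w \<Longrightarrow> wequiv n u w"
  by (auto simp: wequiv_iff_equivclp intro: equivclp_step_words equivclp_sym equivclp_trans)

lemma wequiv_words: "wequiv n u v \<Longrightarrow> v \<in> words n"
  by (auto simp: wequiv_iff_equivclp intro: equivclp_step_words)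

lemma wequiv_append_cong:
  "wequiv n x y \<Longrightarrow> w \<in> words n \<Longrightarrow> w' \<in> words n \<Longrightarrow> wequiv n (w @ x @ w') (w @ y @ w')"
  by (auto simp: wequiv_iff_equivclp intro: equivclp_step_append)

lemma cls_eqI: "wequiv n u v \<Longrightarrow> cls n u = cls n v"
  unfolding cls_def by (auto intro: wequiv_trans wequiv_sym)

lemma mem_cls: "u \<in> words n \<Longrightarrow> u \<in> cls n u"
  by (simp add: cls_def wequiv_iff_equivclp)

lemma gmul_cls: "u \<in> words n \<Longrightarrow> v \<in> words n \<Longrightarrow> gmul n (cls n u) (cls n v) = cls n (u @ v)"
proof -
  assume u: "u \<in> words n" and v: "v \<in> words n"
  define u' where "u' = (SOME x. x \<in> cls n u)"
  define v' where "v' = (SOME x. x \<in> cls n v)"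
  have hu: "wequiv n u u'"
    unfolding u'_def using someI[of "\<lambda>x. x \<in> cls n u", OF mem_cls[OF u]] by (simp add: cls_def)
  have hv: "wequiv n v v'"
    unfolding v'_def using someI[of "\<lambda>x. x \<in> cls n v", OF mem_cls[OF v]] by (simp add: cls_def)
  have "wequiv n (u @ v) (u' @ v)" using wequiv_append_cong[OF hu, of "[]" v] v by simp
  moreover have "wequiv n (u' @ v) (u' @ v')"
    using wequiv_append_cong[OF hv, of u' "[]"] wequiv_words[OF hu] by simp
  ultimately have "wequiv n (u @ v) (u' @ v')" by (rule wequiv_trans)
  then show ?thesis unfolding gmul_def u'_def [symmetric] v'_def [symmetric] by (simp add: cls_eqI)
qed

lemma Gcar_cls [simp]: "u \<in> words n \<Longrightarrow> cls n u \<in> Gcar n"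
  by (simp add: Gcar_def)

lemma GcarE: "g \<in> Gcar n \<Longrightarrow> (\<And>u. u \<in> words n \<Longrightarrow> g = cls n u \<Longrightarrow> P) \<Longrightarrow> P"
  by (auto simp: Gcar_def)

lemma gmul_Gcar: "g \<in> Gcar n \<Longrightarrow> h \<in> Gcar n \<Longrightarrow> gmul n g h \<in> Gcar n"
  by (auto elim!: GcarE simp: gmul_cls)

lemma gmul_assoc:
  "g \<in> Gcar n \<Longrightarrow> h \<in> Gcar n \<Longrightarrow> k \<in> Gcar n \<Longrightarrow> gmul n g (gmul n h k) = gmul n (gmul n g h) k"
  by (auto elim!: GcarE simp: gmul_cls)

lemma gmul_one_left: "g \<in> Gcar n \<Longrightarrow> gmul n (cls n []) g = g"
  and gmul_one_right: "g \<in> Gcar n \<Longrightarrow> gmul n g (cls n []) = g"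
  by (auto elim!: GcarE simp: gmul_cls)

lemma cls_cancel:
  assumes "u \<in> words n" "w \<in> words n" "l \<in> letters n"
  shows "cls n (u @ l # inv_letter l # w) = cls n (u @ w)"
proof -
  have "step n (u @ [l, inv_letter l] @ w) (u @ w)" using assms by (rule step.free)
  then have "wequiv n (u @ [l, inv_letter l] @ w) (u @ w)"
    using assms by (cases l) (auto simp: wequiv_def)
  then show ?thesis by (simp add: cls_eqI)
qed

lemma cls_relator: "u \<in> words n \<Longrightarrow> w \<in> words n \<Longrightarrow> cls n (u @ pw n @ w) = cls n (u @ w)"
  by (rule cls_eqI) (auto simp: wequiv_def intro: step.rel)

section \<open>Finitely supported integer functions\<close>

lemma sum_fun_apply: "(sum F I) x = (\<Sum>i\<in>I. F i x)"
  by (induction I rule: infinite_finite_induct) auto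

lemma supp_zero [simp]: "supp (0 :: 'a \<Rightarrow> int) = {}"
  and supp_uminus [simp]: "supp (- (f :: 'a \<Rightarrow> int)) = supp f"
  and supp_bv [simp]: "supp (bv c) = {c}"
  and supp_add: "supp ((f :: 'a \<Rightarrow> int) + g) \<subseteq> supp f \<union> supp g"
  and supp_diff: "supp ((f :: 'a \<Rightarrow> int) - g) \<subseteq> supp f \<union> supp g"
  by (auto simp: supp_def bv_def)

lemma supp_tens: "supp (tens f g) \<subseteq> supp f \<times> supp g"
  by (auto simp: supp_def tens_def)

lemma supp_sum: "supp (\<Sum>i\<in>I. (F i :: 'a \<Rightarrow> int)) \<subseteq> (\<Union>i\<in>I. supp (F i))"
proof (induction I rule: infinite_finite_induct)
  case (insert x I)
  have "supp (\<Sum>i\<in>insert x I. F i) = supp (F x + (\<Sum>i\<in>I. F i))" using insert(1,2) by simp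
  also have "\<dots> \<subseteq> supp (F x) \<union> supp (\<Sum>i\<in>I. F i)" by (rule supp_add)
  finally show ?case using insert(3) by blast
qed (auto simp: supp_def)

lemma finite_supp_add [simp, intro]:
  "finite (supp f) \<Longrightarrow> finite (supp g) \<Longrightarrow> finite (supp ((f :: 'a \<Rightarrow> int) + g))"
  and finite_supp_diff [simp, intro]:
  "finite (supp f) \<Longrightarrow> finite (supp g) \<Longrightarrow> finite (supp ((f :: 'a \<Rightarrow> int) - g))"
  using supp_add[of f g] supp_diff[of f g] by (auto intro: finite_subset)

lemma finite_supp_tens [simp, intro]:
  "finite (supp f) \<Longrightarrow> finite (supp g) \<Longrightarrow> finite (supp (tens f g))"
  using supp_tens[of f g] by (auto intro: finite_subset)

lemma finite_supp_sum [simp, intro]: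
  "(\<And>i. i \<in> I \<Longrightarrow> finite (supp (F i))) \<Longrightarrow> finite (supp (\<Sum>i\<in>I. (F i :: 'a \<Rightarrow> int)))"
  by (cases "finite I") (auto intro: finite_subset[OF supp_sum])

lemma tens_add_left: "tens (f + f') g = tens f g + tens f' g"
  and tens_add_right: "tens f (g + g') = tens f g + tens f g'"
  and tens_diff_left: "tens (f - f') g = tens f g - tens f' g"
  and tens_diff_right: "tens f (g - g') = tens f g - tens f g'"
  and tens_uminus_left: "tens (- f) g = - tens f g"
  and tens_uminus_right: "tens f (- g) = - tens f g"
  and tens_sum_left: "tens (\<Sum>i\<in>I. F i) g = (\<Sum>i\<in>I. tens (F i) g)"
  and tens_sum_right: "tens f (\<Sum>i\<in>I. G i) = (\<Sum>i\<in>I. tens f (G i))"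
  by (auto simp: tens_def fun_eq_iff algebra_simps sum_fun_apply sum_distrib_left sum_distrib_right)

lemma tens_zero_left [simp]: "tens 0 g = 0"
  and tens_zero_right [simp]: "tens f 0 = 0"
  by (auto simp: tens_def fun_eq_iff)

lemmas tens_linear = tens_add_left tens_add_right tens_diff_left tens_diff_right
  tens_uminus_left tens_uminus_right tens_sum_left tens_sum_right

lemma tens_bv: "tens (bv c) (bv c') = bv (c, c')"
  by (auto simp: tens_def bv_def fun_eq_iff)

lemma lext_superset: "finite S \<Longrightarrow> supp f \<subseteq> S \<Longrightarrow> lext f \<phi> = (\<lambda>d. \<Sum>c\<in>S. f c * \<phi> c d)"
  unfolding lext_def by (rule ext, rule sum.mono_neutral_left) (auto simp: supp_def)

lemma lext_add:
  assumes "finite (supp f)" "finite (supp g)"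
  shows "lext (f + g) \<phi> = lext f \<phi> + lext g \<phi>"
proof -
  let ?S = "supp f \<union> supp g"
  have "lext (f + g) \<phi> = (\<lambda>d. \<Sum>c\<in>?S. (f + g) c * \<phi> c d)"
    by (rule lext_superset) (use assms supp_add[of f g] in auto)
  moreover have "lext f \<phi> = (\<lambda>d. \<Sum>c\<in>?S. f c * \<phi> c d)" by (rule lext_superset) (use assms in auto)
  moreover have "lext g \<phi> = (\<lambda>d. \<Sum>c\<in>?S. g c * \<phi> c d)" by (rule lext_superset) (use assms in auto)
  ultimately show ?thesis by (auto simp: fun_eq_iff algebra_simps sum.distrib)
qed

lemma lext_scale: "finite (supp f) \<Longrightarrow> lext (\<lambda>x. k * f x) \<phi> = (\<lambda>d. k * lext f \<phi> d)"
proof -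
  assume "finite (supp f)"
  then have "lext (\<lambda>x. k * f x) \<phi> = (\<lambda>d. \<Sum>c\<in>supp f. (k * f c) * \<phi> c d)"
    by (intro lext_superset) (auto simp: supp_def)
  then show ?thesis by (simp add: lext_def sum_distrib_left mult.assoc)
qed

lemma lext_diff:
  assumes "finite (supp f)" "finite (supp g)"
  shows "lext (f - g) \<phi> = lext f \<phi> - lext g \<phi>"
proof -
  have "lext (- g) \<phi> = - lext g \<phi>"
    using lext_scale[OF assms(2), of "-1" \<phi>] by (simp add: fun_eq_iff fun_Compl_def)
  then show ?thesis using lext_add[of f "- g" \<phi>] assms by simp
qed

lemma lext_sum:
  "(\<And>i. i \<in> I \<Longrightarrow> finite (supp (F i))) \<Longrightarrow> lext (\<Sum>i\<in>I. F i) \<phi> = (\<Sum>i\<in>I. lext (F i) \<phi>)"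
proof (induction I rule: infinite_finite_induct)
  case (insert x I)
  then have "lext (F x + (\<Sum>i\<in>I. F i)) \<phi> = lext (F x) \<phi> + (\<Sum>i\<in>I. lext (F i) \<phi>)"
    by (simp add: lext_add)
  then show ?case unfolding sum.insert[OF insert(1,2)] .
qed (auto simp: lext_def)

lemma lext_bv [simp]: "lext (bv c) \<phi> = \<phi> c"
  by (simp add: lext_def) (simp add: bv_def)

lemma lext_cong: "(\<And>c. c \<in> supp f \<Longrightarrow> \<phi> c = \<psi> c) \<Longrightarrow> lext f \<phi> = lext f \<psi>"
  by (simp add: lext_def)

lemma lext_lext:
  assumes "finite (supp f)" "\<And>c. c \<in> supp f \<Longrightarrow> finite (supp (\<psi> c))"
  shows "lext (lext f \<psi>) \<phi> = lext f (\<lambda>c. lext (\<psi> c) \<phi>)"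
proof -
  have "lext f \<psi> = (\<Sum>c\<in>supp f. (\<lambda>d. f c * \<psi> c d))"
    by (simp add: lext_def fun_eq_iff sum_fun_apply)
  moreover have "finite (supp (\<lambda>d. f c * \<psi> c d))" if "c \<in> supp f" for c
    using assms(2)[OF that] by (auto simp: supp_def elim!: finite_subset[rotated])
  ultimately show ?thesis
    using assms by (simp add: lext_sum lext_scale) (simp add: lext_def fun_eq_iff sum_fun_apply)
qed

lemma lext_bv_right: "finite (supp f) \<Longrightarrow> lext f bv = f"
  by (rule ext) (auto simp: lext_def bv_def supp_def if_distrib cong: if_cong)

lemma lext_tens:
  assumes "finite (supp f)" "finite (supp g)"
  shows "lext (tens f g) (\<lambda>cc. tens (\<phi> (fst cc)) (\<psi> (snd cc))) = tens (lext f \<phi>) (lext g \<psi>)"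
proof -
  have "lext (tens f g) (\<lambda>cc. tens (\<phi> (fst cc)) (\<psi> (snd cc)))
      = (\<lambda>d. \<Sum>cc\<in>supp f \<times> supp g. tens f g cc * tens (\<phi> (fst cc)) (\<psi> (snd cc)) d)"
    by (rule lext_superset) (use assms supp_tens[of f g] in auto)
  also have "\<dots> = tens (lext f \<phi>) (lext g \<psi>)"
  proof (rule ext, clarify)
    fix d1 d2
    have "(\<Sum>cc\<in>supp f \<times> supp g. tens f g cc * tens (\<phi> (fst cc)) (\<psi> (snd cc)) (d1, d2))
        = (\<Sum>c\<in>supp f. \<Sum>c'\<in>supp g. (f c * \<phi> c d1) * (g c' * \<psi> c' d2))"
      unfolding sum.cartesian_product
      by (rule sum.cong[OF refl], clarify) (simp add: tens_def algebra_simps)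
    also have "\<dots> = lext f \<phi> d1 * lext g \<psi> d2"
      by (simp add: sum_product lext_def)
    finally show "(\<Sum>cc\<in>supp f \<times> supp g. tens f g cc * tens (\<phi> (fst cc)) (\<psi> (snd cc)) (d1, d2))
        = tens (lext f \<phi>) (lext g \<psi>) (d1, d2)"
      by (simp add: tens_def)
  qed
  finally show ?thesis .
qed

lemma supp_lext: "supp (lext f \<phi>) \<subseteq> (\<Union>c\<in>supp f. supp (\<phi> c))"
proof
  fix d assume "d \<in> supp (lext f \<phi>)"
  then have "(\<Sum>c\<in>supp f. f c * \<phi> c d) \<noteq> 0" by (simp add: supp_def lext_def)
  then obtain c where "c \<in> supp f" "f c * \<phi> c d \<noteq> 0" by (meson sum.not_neutral_contains_not_neutral)
  then show "d \<in> (\<Union>c\<in>supp f. supp (\<phi> c))" by (auto simp: supp_def)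
qed

lemma finite_supp_lext [simp, intro]:
  "finite (supp f) \<Longrightarrow> (\<And>c. c \<in> supp f \<Longrightarrow> finite (supp (\<phi> c))) \<Longrightarrow> finite (supp (lext f \<phi>))"
  by (rule finite_subset[OF supp_lext]) auto

definition cell_act :: "nat \<Rightarrow> word set \<Rightarrow> cell \<Rightarrow> cell" where
  "cell_act n g c = (gmul n g (fst c), snd c)"

definition Gcells :: "nat \<Rightarrow> cell set" where
  "Gcells n = {c. fst c \<in> Gcar n}"

lemma act_eq_lext: "act n g f = lext f (\<lambda>c. bv (cell_act n g c))"
  unfolding act_def cell_act_def by (intro arg_cong[where f = "lext f"] ext) (auto split: prod.splits)

lemma act2_eq_lext: "act2 n g F = lext F (\<lambda>cc. bv (cell_act n g (fst cc), cell_act n g (snd cc)))"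
  unfolding act2_def cell_act_def
  by (intro arg_cong[where f = "lext F"] ext) (auto split: prod.splits simp: tens_bv)

lemma finite_supp_ev [simp, intro]: "finite (supp (ev n u e))"
  by (simp add: ev_def)

lemma act_ev: "u \<in> words n \<Longrightarrow> v \<in> words n \<Longrightarrow> act n (cls n v) (ev n u e) = ev n (v @ u) e"
  by (simp add: act_eq_lext ev_def cell_act_def gmul_cls)

lemma act_diff:
  "finite (supp f) \<Longrightarrow> finite (supp g) \<Longrightarrow> act n h (f - g) = act n h f - act n h g"
  by (simp add: act_eq_lext lext_diff)

lemma act2_add:
  "finite (supp F) \<Longrightarrow> finite (supp G) \<Longrightarrow> act2 n h (F + G) = act2 n h F + act2 n h G"
  and act2_diff:
  "finite (supp F) \<Longrightarrow> finite (supp G) \<Longrightarrow> act2 n h (F - G) = act2 n h F - act2 n h G"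
  by (simp_all add: act2_eq_lext lext_add lext_diff)

lemma act2_sum:
  "(\<And>i. i \<in> I \<Longrightarrow> finite (supp (F i))) \<Longrightarrow> act2 n h (\<Sum>i\<in>I. F i) = (\<Sum>i\<in>I. act2 n h (F i))"
  by (simp add: act2_eq_lext lext_sum)

lemma act2_tens:
  "finite (supp f) \<Longrightarrow> finite (supp h) \<Longrightarrow> act2 n g (tens f h) = tens (act n g f) (act n g h)"
  unfolding act2_eq_lext act_eq_lext tens_bv [symmetric] by (rule lext_tens)

lemma act2_comp:
  assumes "g \<in> Gcar n" "h \<in> Gcar n" "finite (supp F)" "supp F \<subseteq> Gcells n \<times> Gcells n"
  shows "act2 n g (act2 n h F) = act2 n (gmul n g h) F"
  unfolding act2_eq_lext using assms
  by (subst lext_lext) (auto intro!: lext_cong simp: cell_act_def Gcells_def gmul_assoc)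

lemma act2_one: "finite (supp F) \<Longrightarrow> supp F \<subseteq> Gcells n \<times> Gcells n \<Longrightarrow> act2 n (cls n []) F = F"
  unfolding act2_eq_lext
  by (subst lext_bv_right[symmetric], assumption)
    (intro lext_cong, auto simp: cell_act_def gmul_one_left Gcells_def)

lemma cells_iff: "c \<in> cells n r \<longleftrightarrow> fst c \<in> Gcar n \<and> valid_gen n (snd c) \<and> deg (snd c) = r"
  by (cases c) (simp add: cells_def)

lemma Pmod_iff: "f \<in> Pmod n r \<longleftrightarrow> finite (supp f) \<and> supp f \<subseteq> cells n r"
  by (simp add: Pmod_def)

lemma Pmod_finite: "f \<in> Pmod n r \<Longrightarrow> finite (supp f)"
  by (simp add: Pmod_iff)

lemma ev_Pmod [simp]: "u \<in> words n \<Longrightarrow> valid_gen n e \<Longrightarrow> deg e = r \<Longrightarrow> ev n u e \<in> Pmod n r"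
  by (simp add: Pmod_iff ev_def cells_iff)

lemma Pmod_add [simp]: "f \<in> Pmod n r \<Longrightarrow> g \<in> Pmod n r \<Longrightarrow> f + g \<in> Pmod n r"
  and Pmod_diff [simp]: "f \<in> Pmod n r \<Longrightarrow> g \<in> Pmod n r \<Longrightarrow> f - g \<in> Pmod n r"
  using supp_add[of f g] supp_diff[of f g] by (auto simp: Pmod_iff)

lemma Pmod_sum [simp]: "(\<And>i. i \<in> I \<Longrightarrow> F i \<in> Pmod n r) \<Longrightarrow> (\<Sum>i\<in>I. F i) \<in> Pmod n r"
proof (induction I rule: infinite_finite_induct)
  case (insert x I)
  then have "F x + (\<Sum>i\<in>I. F i) \<in> Pmod n r" by simp
  then show ?case unfolding sum.insert[OF insert(1,2)] .
qed (simp_all add: Pmod_iff)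

definition PPbideg :: "nat \<Rightarrow> nat \<Rightarrow> nat \<Rightarrow> (cell \<times> cell \<Rightarrow> int) set" where
  "PPbideg n r s = {F. finite (supp F) \<and> supp F \<subseteq> cells n r \<times> cells n s}"

lemma PPbideg_add [simp]: "F \<in> PPbideg n r s \<Longrightarrow> G \<in> PPbideg n r s \<Longrightarrow> F + G \<in> PPbideg n r s"
  and PPbideg_diff [simp]: "F \<in> PPbideg n r s \<Longrightarrow> G \<in> PPbideg n r s \<Longrightarrow> F - G \<in> PPbideg n r s"
  and tens_PPbideg [simp]: "f \<in> Pmod n r \<Longrightarrow> g \<in> Pmod n s \<Longrightarrow> tens f g \<in> PPbideg n r s"
  using supp_add[of F G] supp_diff[of F G] supp_tens[of f g]
  by (auto simp: PPbideg_def Pmod_iff)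

lemma PPbideg_sum [simp]:
  "(\<And>i. i \<in> I \<Longrightarrow> F i \<in> PPbideg n r s) \<Longrightarrow> (\<Sum>i\<in>I. F i) \<in> PPbideg n r s"
proof (induction I rule: infinite_finite_induct)
  case (insert x I)
  then have "F x + (\<Sum>i\<in>I. F i) \<in> PPbideg n r s" by simp
  then show ?case unfolding sum.insert[OF insert(1,2)] .
qed (simp_all add: PPbideg_def)

lemma PPbideg_PPmod: "F \<in> PPbideg n r s \<Longrightarrow> m = r + s \<Longrightarrow> F \<in> PPmod n m"
  by (auto simp: PPbideg_def PPmod_def)

lemma tens_PPmod: "f \<in> Pmod n r \<Longrightarrow> g \<in> Pmod n s \<Longrightarrow> tens f g \<in> PPmod n (r + s)"
  by (rule PPbideg_PPmod[OF tens_PPbideg refl])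

lemma PPmod_add [simp]: "F \<in> PPmod n m \<Longrightarrow> G \<in> PPmod n m \<Longrightarrow> F + G \<in> PPmod n m"
  using supp_add[of F G] by (auto simp: PPmod_def)

lemma PPmod_finite: "F \<in> PPmod n m \<Longrightarrow> finite (supp F)"
  by (simp add: PPmod_def)

lemma PPmod_Gcells: "F \<in> PPmod n m \<Longrightarrow> supp F \<subseteq> Gcells n \<times> Gcells n"
  by (force simp: PPmod_def Gcells_def cells_iff)

lemma lext_PPmod:
  assumes "finite (supp f)" "\<And>c. c \<in> supp f \<Longrightarrow> \<phi> c \<in> PPmod n m"
  shows "lext f \<phi> \<in> PPmod n m"
proof -
  let ?T = "{(c, c'). \<exists>r s. c \<in> cells n r \<and> c' \<in> cells n s \<and> r + s = m}"
  have "supp (\<phi> c) \<subseteq> ?T" if "c \<in> supp f" for c using assms(2)[OF that] unfolding PPmod_def by blast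
  then have "supp (lext f \<phi>) \<subseteq> ?T" using supp_lext[of f \<phi>] by blast
  moreover have "finite (supp (lext f \<phi>))" using assms by (auto intro: PPmod_finite)
  ultimately show ?thesis unfolding PPmod_def by blast
qed

lemma act2_PPmod:
  assumes g: "g \<in> Gcar n" and F: "F \<in> PPmod n m"
  shows "act2 n g F \<in> PPmod n m"
  unfolding act2_eq_lext
proof (rule lext_PPmod)
  fix cc assume "cc \<in> supp F"
  then have "cc \<in> {(c, c'). \<exists>r s. c \<in> cells n r \<and> c' \<in> cells n s \<and> r + s = m}"
    using F unfolding PPmod_def by blast
  then obtain r s where "fst cc \<in> cells n r" "snd cc \<in> cells n s" "r + s = m" by auto
  with g show "bv (cell_act n g (fst cc), cell_act n g (snd cc)) \<in> PPmod n m"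
    by (auto simp: PPmod_def cell_act_def cells_iff gmul_Gcar)
qed (use F in \<open>simp add: PPmod_finite\<close>)

fun diag_gen :: "nat \<Rightarrow> gen \<Rightarrow> (cell \<times> cell \<Rightarrow> int)" where
  "diag_gen n X = tens (ev n [] X) (ev n [] X)"
| "diag_gen n (Y i) = tens (ev n [] (Y i)) (ev n [la i] X) + tens (ev n [] X) (ev n [] (Y i))"
| "diag_gen n (Z i) = tens (ev n [] (Z i)) (ev n [lb i] X) + tens (ev n [] X) (ev n [] (Z i))"
| "diag_gen n W = tens (ev n [] W) (ev n (pw (n - 1) @ [la n, lb n]) X)
                 + tens (ev n [] X) (ev n [] W) + Delta11 n"

definition diag_cell :: "nat \<Rightarrow> cell \<Rightarrow> (cell \<times> cell \<Rightarrow> int)" where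
  "diag_cell n c = act2 n (fst c) (diag_gen n (snd c))"

definition diag :: "nat \<Rightarrow> (cell \<Rightarrow> int) \<Rightarrow> (cell \<times> cell \<Rightarrow> int)" where
  "diag n f = lext f (diag_cell n)"

lemma finite_supp_Aterm [simp]: "finite (supp (Aterm n j))"
  and finite_supp_Bterm [simp]: "finite (supp (Bterm n j))"
  by (simp_all add: Aterm_def Bterm_def)

lemma Delta11_PPbideg: "1 \<le> n \<Longrightarrow> Delta11 n \<in> PPbideg n 1 1"
  unfolding Delta11_def Aterm_def Bterm_def
  by (intro PPbideg_add PPbideg_diff PPbideg_sum tens_PPbideg Pmod_add Pmod_diff ev_Pmod)
    (auto simp del: One_nat_def)

lemma diag_gen_PPmod:
  assumes n: "1 \<le> n" and e: "valid_gen n e"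
  shows "diag_gen n e \<in> PPmod n (deg e)"
proof (cases e)
  case X
  then show ?thesis using tens_PPmod[of "ev n [] X" n 0 "ev n [] X" 0] by simp
next
  case (Y i)
  then show ?thesis
    using e tens_PPmod[of "ev n [] (Y i)" n 1 "ev n [la i] X" 0]
      tens_PPmod[of "ev n [] X" n 0 "ev n [] (Y i)" 1]
    by simp
next
  case (Z i)
  then show ?thesis
    using e tens_PPmod[of "ev n [] (Z i)" n 1 "ev n [lb i] X" 0]
      tens_PPmod[of "ev n [] X" n 0 "ev n [] (Z i)" 1]
    by simp
next
  case W
  then show ?thesis
    using n tens_PPmod[of "ev n [] W" n 2 "ev n (pw (n - 1) @ [la n, lb n]) X" 0]
      tens_PPmod[of "ev n [] X" n 0 "ev n [] W" 2] PPbideg_PPmod[OF Delta11_PPbideg[OF n] refl]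
    by (simp add: numeral_2_eq_2)
qed

lemma diag_cell_PPmod: "1 \<le> n \<Longrightarrow> c \<in> cells n r \<Longrightarrow> diag_cell n c \<in> PPmod n r"
  unfolding diag_cell_def by (auto simp: cells_iff intro!: act2_PPmod diag_gen_PPmod)

lemma diag_PPmod: "1 \<le> n \<Longrightarrow> f \<in> Pmod n r \<Longrightarrow> diag n f \<in> PPmod n r"
  unfolding diag_def by (rule lext_PPmod) (auto simp: Pmod_iff intro!: diag_cell_PPmod)

lemma diag_add: "finite (supp f) \<Longrightarrow> finite (supp g) \<Longrightarrow> diag n (f + g) = diag n f + diag n g"
  and diag_diff: "finite (supp f) \<Longrightarrow> finite (supp g) \<Longrightarrow> diag n (f - g) = diag n f - diag n g"
  by (simp_all add: diag_def lext_add lext_diff)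

lemma diag_sum:
  "(\<And>i. i \<in> I \<Longrightarrow> finite (supp (F i))) \<Longrightarrow> diag n (\<Sum>i\<in>I. F i) = (\<Sum>i\<in>I. diag n (F i))"
  by (simp add: diag_def lext_sum)

lemma diag_ev: "diag n (ev n u e) = diag_cell n (cls n u, e)"
  by (simp add: diag_def ev_def)

lemma diag_act:
  assumes n: "1 \<le> n" and g: "g \<in> Gcar n" and f: "f \<in> Pmod n r"
  shows "diag n (act n g f) = act2 n g (diag n f)"
proof -
  have ff: "finite (supp f)" and cf: "\<And>c. c \<in> supp f \<Longrightarrow> c \<in> cells n r"
    using f by (auto simp: Pmod_iff)
  have diag_cell_act: "diag_cell n (cell_act n g c) = act2 n g (diag_cell n c)" if "c \<in> supp f" for c
  proof -
    have B: "diag_gen n (snd c) \<in> PPmod n (deg (snd c))"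
      using cf[OF that] n by (intro diag_gen_PPmod) (auto simp: cells_iff)
    show ?thesis
      using act2_comp[OF g _ PPmod_finite[OF B] PPmod_Gcells[OF B], of "fst c"] cf[OF that]
      by (simp add: diag_cell_def cell_act_def cells_iff)
  qed
  have "diag n (act n g f) = lext f (\<lambda>c. act2 n g (diag_cell n c))"
    unfolding diag_def act_eq_lext by (simp add: lext_lext[OF ff] diag_cell_act cong: lext_cong)
  also have "\<dots> = act2 n g (diag n f)"
    unfolding diag_def act2_eq_lext
    by (subst lext_lext[OF ff]) (simp_all add: PPmod_finite[OF diag_cell_PPmod[OF n cf]])
  finally show ?thesis .
qed

lemma ZG_linear_diag: "1 \<le> n \<Longrightarrow> ZG_linear n r (diag n)"
  unfolding ZG_linear_def by (auto simp: Pmod_finite intro: diag_PPmod diag_add diag_act)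

lemma diag_ev_Nil: "1 \<le> n \<Longrightarrow> valid_gen n e \<Longrightarrow> diag n (ev n [] e) = diag_gen n e"
  using diag_gen_PPmod[of n e]
  by (simp add: diag_ev diag_cell_def act2_one PPmod_finite PPmod_Gcells)

lemma diag_cell_X:
  assumes "h \<in> Gcar n"
  shows "diag_cell n (h, X) = bv ((h, X), (h, X))"
proof -
  have "act n h (ev n [] X) = bv (h, X)"
    using assms by (simp add: act_eq_lext ev_def cell_act_def gmul_one_right)
  then show ?thesis by (simp add: diag_cell_def act2_tens tens_bv)
qed

lemma eps2_superset:
  "finite S \<Longrightarrow> supp F \<subseteq> S \<Longrightarrow> eps2 F = (\<Sum>cc\<in>S. if snd (fst cc) = X \<and> snd (snd cc) = X then F cc else 0)"
  unfolding eps2_def by (rule sum.mono_neutral_left) (auto simp: supp_def)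

lemma eps2_bv: "eps2 (bv cc) = (if snd (fst cc) = X \<and> snd (snd cc) = X then 1 else 0)"
  unfolding eps2_def supp_bv by (simp add: bv_def)

lemma eps2_lext:
  assumes f: "finite (supp f)" and \<phi>: "\<And>c. c \<in> supp f \<Longrightarrow> finite (supp (\<phi> c))"
  shows "eps2 (lext f \<phi>) = (\<Sum>c\<in>supp f. f c * eps2 (\<phi> c))"
proof -
  let ?S = "\<Union>c\<in>supp f. supp (\<phi> c)"
  let ?P = "\<lambda>cc. snd (fst cc) = X \<and> snd (snd cc) = X"
  have S: "finite ?S" using f \<phi> by blast
  have "eps2 (lext f \<phi>) = (\<Sum>cc\<in>?S. if ?P cc then (\<Sum>c\<in>supp f. f c * \<phi> c cc) else 0)"
    using supp_lext[of f \<phi>] by (simp add: eps2_superset[OF S] lext_def)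
  also have "\<dots> = (\<Sum>cc\<in>?S. \<Sum>c\<in>supp f. if ?P cc then f c * \<phi> c cc else 0)"
  proof (rule sum.cong[OF refl])
    fix cc show "(if ?P cc then \<Sum>c\<in>supp f. f c * \<phi> c cc else 0)
        = (\<Sum>c\<in>supp f. if ?P cc then f c * \<phi> c cc else 0)"
    proof (cases "?P cc")
      case False
      then show ?thesis by (simp only: if_False sum.neutral_const)
    qed simp
  qed
  also have "\<dots> = (\<Sum>c\<in>supp f. \<Sum>cc\<in>?S. if ?P cc then f c * \<phi> c cc else 0)"
    by (rule sum.swap)
  also have "\<dots> = (\<Sum>c\<in>supp f. f c * (\<Sum>cc\<in>?S. if ?P cc then \<phi> c cc else 0))"
    by (auto simp: sum_distrib_left intro!: sum.cong)
  also have "\<dots> = (\<Sum>c\<in>supp f. f c * eps2 (\<phi> c))"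
    by (intro sum.cong refl arg_cong2[where f = "(*)"] eps2_superset[OF S, symmetric]) auto
  finally show ?thesis .
qed

lemma diag_eps: "f \<in> Pmod n 0 \<Longrightarrow> eps2 (diag n f) = eps f"
proof -
  assume f: "f \<in> Pmod n 0"
  have cX: "snd c = X \<and> fst c \<in> Gcar n" if "c \<in> supp f" for c
  proof -
    have "c \<in> cells n 0" using f that by (auto simp: Pmod_iff)
    then show ?thesis by (cases "snd c") (auto simp: cells_iff)
  qed
  have dX: "diag_cell n c = bv (c, c)" if "c \<in> supp f" for c
    using cX[OF that] diag_cell_X[of "fst c" n] by (cases c) auto
  have "eps2 (diag n f) = (\<Sum>c\<in>supp f. f c * eps2 (diag_cell n c))"
    unfolding diag_def using f by (subst eps2_lext) (auto simp: Pmod_iff dX)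
  also have "\<dots> = (\<Sum>c\<in>supp f. if snd c = X then f c else 0)"
    using cX by (intro sum.cong refl) (auto simp: dX eps2_bv)
  finally show ?thesis by (simp add: eps_def)
qed

definition dPP_cell :: "nat \<Rightarrow> cell \<times> cell \<Rightarrow> (cell \<times> cell \<Rightarrow> int)" where
  "dPP_cell n = (\<lambda>(c, c'). tens (dP n c) (bv c') + (\<lambda>t. (-1) ^ deg (snd c) * tens (bv c) (dP n c') t))"

lemma dPP_eq_lext: "dPP n F = lext F (dPP_cell n)"
  by (simp add: dPP_def dPP_cell_def)

lemma dPP_add: "finite (supp F) \<Longrightarrow> finite (supp G) \<Longrightarrow> dPP n (F + G) = dPP n F + dPP n G"
  and dPP_diff: "finite (supp F) \<Longrightarrow> finite (supp G) \<Longrightarrow> dPP n (F - G) = dPP n F - dPP n G"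
  and dmap_add: "finite (supp f) \<Longrightarrow> finite (supp g) \<Longrightarrow> dmap n (f + g) = dmap n f + dmap n g"
  and dmap_diff: "finite (supp f) \<Longrightarrow> finite (supp g) \<Longrightarrow> dmap n (f - g) = dmap n f - dmap n g"
  by (simp_all add: dPP_eq_lext dmap_def lext_add lext_diff)

lemma dPP_sum:
  "(\<And>i. i \<in> I \<Longrightarrow> finite (supp (F i))) \<Longrightarrow> dPP n (\<Sum>i\<in>I. F i) = (\<Sum>i\<in>I. dPP n (F i))"
  by (simp add: dPP_eq_lext lext_sum)

lemma dmap_ev: "dmap n (ev n u e) = dP n (cls n u, e)"
  by (simp add: dmap_def ev_def)

lemma dmap_ev_X: "dmap n (ev n u X) = 0"
  by (simp add: dmap_ev fun_eq_iff)

lemma dPP_tens: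
  assumes f: "f \<in> Pmod n r" and g: "finite (supp g)"
  shows "dPP n (tens f g) = tens (dmap n f) g + (\<lambda>t. (-1) ^ r * tens f (dmap n g) t)"
proof -
  have ff: "finite (supp f)" using f by (simp add: Pmod_iff)
  have deg: "deg e = r" if "((c, e), cc') \<in> supp (tens f g)" for c e cc'
    using f that supp_tens[of f g] by (force simp: Pmod_iff cells_iff)
  let ?L = "\<lambda>cc. tens (dP n (fst cc)) (bv (snd cc))" and ?R = "\<lambda>cc. tens (bv (fst cc)) (dP n (snd cc))"
  have "dPP n (tens f g) = lext (tens f g) (\<lambda>cc. ?L cc + (\<lambda>t. (-1) ^ r * ?R cc t))"
    unfolding dPP_eq_lext dPP_cell_def by (rule lext_cong) (auto simp: deg split: prod.splits)
  also have "\<dots> = lext (tens f g) ?L + (\<lambda>t. (-1) ^ r * lext (tens f g) ?R t)"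
    by (simp add: lext_def fun_eq_iff sum.distrib sum_distrib_left algebra_simps)
  also have "\<dots> = tens (dmap n f) g + (\<lambda>t. (-1) ^ r * tens f (dmap n g) t)"
    using ff g by (simp add: lext_tens lext_bv_right dmap_def)
  finally show ?thesis .
qed

lemma dPP_tens_even:
  "f \<in> Pmod n r \<Longrightarrow> even r \<Longrightarrow> finite (supp g) \<Longrightarrow> dPP n (tens f g) = tens (dmap n f) g + tens f (dmap n g)"
  and dPP_tens_deg1:
  "f \<in> Pmod n 1 \<Longrightarrow> finite (supp g) \<Longrightarrow> dPP n (tens f g) = tens (dmap n f) g - tens f (dmap n g)"
  by (simp_all add: dPP_tens fun_eq_iff)

section \<open>Fox derivatives of the relator\<close>

lemma fox_append: "fox g (u @ w) = fox g u @ map (\<lambda>(x, k). (u @ x, k)) (fox g w)"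
  by (induction u) (auto simp: case_prod_beta comp_def)

lemma fox_concat_comm_other: "i \<notin> set js \<Longrightarrow> fox (i, b) (concat (map comm js)) = []"
  by (induction js) (auto simp: fox_append comm_def la_def lb_def lai_def lbi_def)

lemma fox_comm_a: "fox (i, False) (comm i) = [([], 1), ([la i, lb i, lai i], -1)]"
  and fox_comm_b: "fox (i, True) (comm i) = [([la i], 1), ([la i, lb i, lai i, lbi i], -1)]"
  by (simp_all add: comm_def la_def lb_def lai_def lbi_def)

lemma pw_split: "1 \<le> i \<Longrightarrow> i \<le> n \<Longrightarrow> pw n = pw (i - 1) @ comm i @ concat (map comm [Suc i..<Suc n])"
proof -
  assume i: "1 \<le> i" "i \<le> n"
  have "[1..<n+1] = [1..<i] @ i # [Suc i..<Suc n]"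
    using i upt_add_eq_append[of 1 i "n + 1 - i"] by (simp add: upt_conv_Cons)
  then show ?thesis using i by (simp add: pw_def)
qed

lemma fox_pw:
  assumes "1 \<le> i" "i \<le> n"
  shows "fox (i, False) (pw n) = [(pw (i - 1), 1), (pw (i - 1) @ [la i, lb i, lai i], -1)]"
    and "fox (i, True) (pw n) =
          [(pw (i - 1) @ [la i], 1), (pw (i - 1) @ [la i, lb i, lai i, lbi i], -1)]"
proof -
  have "fox (i, b) (pw (i - 1)) = []" for b
    unfolding pw_def using assms by (intro fox_concat_comm_other) auto
  moreover have "fox (i, b) (concat (map comm [Suc i..<Suc n])) = []" for b
    by (intro fox_concat_comm_other) auto
  ultimately show "fox (i, False) (pw n) = [(pw (i - 1), 1), (pw (i - 1) @ [la i, lb i, lai i], -1)]"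
    and "fox (i, True) (pw n) = [(pw (i - 1) @ [la i], 1), (pw (i - 1) @ [la i, lb i, lai i, lbi i], -1)]"
    by (simp_all only: pw_split[OF assms] fox_append fox_comm_a fox_comm_b) simp_all
qed

lemma fcomb_pair: "v \<in> words n \<Longrightarrow> u1 \<in> words n \<Longrightarrow> u2 \<in> words n \<Longrightarrow>
  fcomb n (cls n v) [(u1, 1), (u2, -1)] e = ev n (v @ u1) e - ev n (v @ u2) e"
  by (auto simp: fcomb_def fun_eq_iff gmul_cls ev_def bv_def)

lemma sum_list_if_nonzero:
  "(\<Sum>(u, k)\<leftarrow>ts. if c = h u then k else (0::int)) \<noteq> 0 \<Longrightarrow> c \<in> (\<lambda>(u, k). h u) ` set ts"
  by (induction ts) (auto split: if_splits)

lemma finite_supp_fcomb [simp]: "finite (supp (fcomb n g ts e))"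
proof -
  have "supp (fcomb n g ts e) \<subseteq> (\<lambda>(u, k). (gmul n g (cls n u), e)) ` set ts"
  proof
    fix c assume c: "c \<in> supp (fcomb n g ts e)"
    have "(\<Sum>(u, k)\<leftarrow>ts. if c = (gmul n g (cls n u), e) then k else 0) \<noteq> 0"
      using c by (simp add: supp_def fcomb_def)
    then show "c \<in> (\<lambda>(u, k). (gmul n g (cls n u), e)) ` set ts"
      by (rule sum_list_if_nonzero)
  qed
  then show ?thesis by (rule finite_subset) simp
qed

lemma finite_supp_dP [simp]: "finite (supp (dP n c))"
proof -
  obtain g e where "c = (g, e)" by (cases c)
  then show ?thesis by (cases e) simp_all
qed

text \<open>
  With q = v p_1\<cdots>p_{i-1}, the cells below are q y_i, q a_ib_ia_i^{-1} y_i, q a_i z_i, q p_i z_i and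
  q x, q a_i x, q a_ib_i x, q a_ib_ia_i^{-1} x; fox_term and fox_partial are v T_i and v S_i.
\<close>

definition "y_q n v i = ev n (v @ pw (i - 1)) (Y i)"
definition "y_c n v i = ev n (v @ pw (i - 1) @ [la i, lb i, lai i]) (Y i)"
definition "z_a n v i = ev n (v @ pw (i - 1) @ [la i]) (Z i)"
definition "z_p n v i = ev n (v @ pw i) (Z i)"
definition "x_q n v i = ev n (v @ pw (i - 1)) X"
definition "x_a n v i = ev n (v @ pw (i - 1) @ [la i]) X"
definition "x_ab n v i = ev n (v @ pw (i - 1) @ [la i, lb i]) X"
definition "x_c n v i = ev n (v @ pw (i - 1) @ [la i, lb i, lai i]) X"

lemmas cell_defs = y_q_def y_c_def z_a_def z_p_def x_q_def x_a_def x_ab_def x_c_def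

definition "fox_term n v i = y_q n v i - y_c n v i + z_a n v i - z_p n v i"
definition "fox_partial n v i = (\<Sum>j\<in>{1..<i}. fox_term n v j)"

lemma finite_supp_cells [simp]:
  "finite (supp (y_q n v i))" "finite (supp (y_c n v i))" "finite (supp (z_a n v i))"
  "finite (supp (z_p n v i))" "finite (supp (x_q n v i))" "finite (supp (x_a n v i))"
  "finite (supp (x_ab n v i))" "finite (supp (x_c n v i))"
  "finite (supp (fox_term n v i))" "finite (supp (fox_partial n v i))"
  by (simp_all add: cell_defs fox_term_def fox_partial_def)

lemma dmap_x_cells [simp]: "dmap n (x_q n v i) = 0" "dmap n (x_ab n v i) = 0"
  by (simp_all only: x_q_def x_ab_def dmap_ev_X)

context
  fixes n :: nat and v :: word and i :: nat
  assumes v: "v \<in> words n" and i: "1 \<le> i" "i \<le> n"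
begin

lemma cells_Pmod:
  "y_q n v i \<in> Pmod n 1" "y_c n v i \<in> Pmod n 1" "z_a n v i \<in> Pmod n 1" "z_p n v i \<in> Pmod n 1"
  "x_q n v i \<in> Pmod n 0" "x_q n v (Suc i) \<in> Pmod n 0" "fox_term n v i \<in> Pmod n 1"
  using v i by (simp_all add: cell_defs fox_term_def)

lemma ev_conj_a: "ev n (v @ pw (i - 1) @ [la i, lb i, lai i, la i]) e = ev n (v @ pw (i - 1) @ [la i, lb i]) e"
  using cls_cancel[of "v @ pw (i - 1) @ [la i, lb i]" n "[]" "lai i"] v i by (simp add: ev_def)

lemma ev_conj_b: "ev n (v @ pw i @ [lb i]) e = ev n (v @ pw (i - 1) @ [la i, lb i, lai i]) e"
  using cls_cancel[of "v @ pw (i - 1) @ [la i, lb i, lai i]" n "[]" "lbi i"] v i pw_snoc_comm[OF i(1)]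
  by (simp add: ev_def)

lemma dmap_ev_Y: "u \<in> words n \<Longrightarrow> dmap n (ev n u (Y i)) = ev n (u @ [la i]) X - ev n u X"
  and dmap_ev_Z: "u \<in> words n \<Longrightarrow> dmap n (ev n u (Z i)) = ev n (u @ [lb i]) X - ev n u X"
  using i by (simp_all only: dmap_ev) (simp_all add: gmul_cls ev_def)

lemma diag_ev_Y: "u \<in> words n \<Longrightarrow>
    diag n (ev n u (Y i)) = tens (ev n u (Y i)) (ev n (u @ [la i]) X) + tens (ev n u X) (ev n u (Y i))"
  and diag_ev_Z: "u \<in> words n \<Longrightarrow>
    diag n (ev n u (Z i)) = tens (ev n u (Z i)) (ev n (u @ [lb i]) X) + tens (ev n u X) (ev n u (Z i))"
  using i by (simp_all add: diag_ev diag_cell_def act2_add act2_tens act_ev)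

lemmas ev_conj = ev_conj_a [simplified] ev_conj_b [simplified]

lemma dmap_cells:
  "dmap n (y_q n v i) = x_a n v i - x_q n v i"
  "dmap n (y_c n v i) = x_ab n v i - x_c n v i"
  "dmap n (z_a n v i) = x_ab n v i - x_a n v i"
  "dmap n (z_p n v i) = x_c n v i - x_q n v (Suc i)"
  using v i by (simp_all add: cell_defs dmap_ev_Y dmap_ev_Z ev_conj)

lemma diag_cells:
  "diag n (y_q n v i) = tens (y_q n v i) (x_a n v i) + tens (x_q n v i) (y_q n v i)"
  "diag n (y_c n v i) = tens (y_c n v i) (x_ab n v i) + tens (x_c n v i) (y_c n v i)"
  "diag n (z_a n v i) = tens (z_a n v i) (x_ab n v i) + tens (x_a n v i) (z_a n v i)"
  "diag n (z_p n v i) = tens (z_p n v i) (x_c n v i) + tens (x_q n v (Suc i)) (z_p n v i)"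
  using v i by (simp_all add: cell_defs diag_ev_Y diag_ev_Z ev_conj)

lemma dmap_fox_term: "dmap n (fox_term n v i) = x_q n v (Suc i) - x_q n v i"
  by (simp add: fox_term_def dmap_add dmap_diff dmap_cells)

end

lemma fox_partial_1 [simp]: "fox_partial n v (Suc 0) = 0"
  by (simp add: fox_partial_def)

lemma fox_partial_Suc: "1 \<le> i \<Longrightarrow> fox_partial n v (Suc i) = fox_partial n v i + fox_term n v i"
  by (simp add: fox_partial_def add.commute)

lemma fox_partial_Pmod: "v \<in> words n \<Longrightarrow> i \<le> Suc n \<Longrightarrow> fox_partial n v i \<in> Pmod n 1"
  unfolding fox_partial_def by (intro Pmod_sum cells_Pmod(7)) auto

lemma dmap_fox_partial:
  assumes v: "v \<in> words n"
  shows "1 \<le> i \<Longrightarrow> i \<le> Suc n \<Longrightarrow> dmap n (fox_partial n v i) = x_q n v i - x_q n v 1"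
proof (induction i rule: nat_induct_at_least)
  case (Suc i)
  have "dmap n (fox_partial n v (Suc i)) = dmap n (fox_partial n v i) + dmap n (fox_term n v i)"
    by (simp only: fox_partial_Suc[OF Suc(1)] dmap_add finite_supp_cells)
  then show ?case using Suc v by (simp add: dmap_fox_term)
qed (simp add: dmap_def lext_def fun_eq_iff)

lemma dP_W: "v \<in> words n \<Longrightarrow> dP n (cls n v, W) = fox_partial n v (Suc n)"
  unfolding dP.simps fox_partial_def atLeastLessThanSuc_atLeastAtMost
proof (rule sum.cong[OF refl])
  fix i assume v: "v \<in> words n" and "i \<in> {1..n}"
  then have i: "1 \<le> i" "i \<le> n" by auto
  then show "fcomb n (cls n v) (fox (i, False) (pw n)) (Y i) + fcomb n (cls n v) (fox (i, True) (pw n)) (Z i)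
      = fox_term n v i"
    using v pw_snoc_comm[OF i(1)]
    by (simp add: fox_pw[OF i] fcomb_pair fox_term_def cell_defs algebra_simps)
qed

section \<open>The chain-map identity\<close>

text \<open>
  D11_block n v i is v times the i-th terms of the four large sums in \<Delta>_11(w), the inner sums
  over j collapsed to S_i (to S_{i+1} in the fourth sum). D11_last n v collects the n-th terms of the
  first and third sums and the final term, using b_n y_n = p_1\<cdots>p_{n-1} a_nb_na_n^{-1} y_n.
\<close>

definition "D11_block n v i = tens (fox_partial n v i) (y_q n v i)
   - (tens (fox_partial n v i) (y_c n v i) + tens (y_q n v i - y_c n v i) (y_c n v i) + tens (z_a n v i) (y_c n v i))
   + (tens (fox_partial n v i) (z_a n v i) + tens (y_q n v i) (z_a n v i))
   - tens (fox_partial n v (Suc i)) (z_p n v i)"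

definition "D11_last n v = tens (fox_partial n v n) (y_q n v n)
   + (tens (fox_partial n v n) (z_a n v n) + tens (y_q n v n) (z_a n v n))
   - tens (z_p n v n) (y_c n v n)"

lemma finite_supp_D11 [simp]: "finite (supp (D11_block n v i))" "finite (supp (D11_last n v))"
  by (simp_all add: D11_block_def D11_last_def)

lemma dPP_D11_block:
  assumes v: "v \<in> words n" and i: "1 \<le> i" "i \<le> n"
  shows "dPP n (D11_block n v i) = tens (fox_partial n v i) (x_q n v i)
    - tens (fox_partial n v (Suc i)) (x_q n v (Suc i)) - tens (x_q n v 1) (fox_term n v i)
    + diag n (fox_term n v i)"
proof -
  have S: "fox_partial n v i \<in> Pmod n 1" "fox_partial n v (Suc i) \<in> Pmod n 1"
    using fox_partial_Pmod[of v n i] fox_partial_Pmod[of v n "Suc i"] v i by simp_all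
  have dS: "dmap n (fox_partial n v i) = x_q n v i - x_q n v 1"
    "dmap n (fox_partial n v (Suc i)) = x_q n v (Suc i) - x_q n v 1"
    using v i by (simp_all add: dmap_fox_partial)
  show ?thesis
    unfolding D11_block_def fox_term_def
    using cells_Pmod[OF v i] S
    by (simp add: dPP_add dPP_diff dPP_tens_deg1 dmap_diff diag_add diag_diff Pmod_finite dS
        dmap_cells[OF v i] diag_cells[OF v i] fox_partial_Suc[OF i(1)] tens_linear fox_term_def)
qed

lemma dPP_D11_last:
  assumes v: "v \<in> words n" and n: "1 \<le> n"
  shows "dPP n (D11_last n v) = tens (fox_partial n v n) (x_q n v n)
    - tens (fox_partial n v (Suc n)) (x_ab n v n) - tens (x_q n v 1) (fox_term n v n)
    + diag n (fox_term n v n)"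
proof -
  have i: "1 \<le> n" "n \<le> n" using n by auto
  have S: "fox_partial n v n \<in> Pmod n 1" using fox_partial_Pmod[of v n n] v by simp
  have dS: "dmap n (fox_partial n v n) = x_q n v n - x_q n v 1" using v n by (simp add: dmap_fox_partial)
  have rel: "x_q n v (Suc n) = x_q n v 1" using cls_relator[of v n "[]"] v by (simp add: x_q_def ev_def)
  show ?thesis
    unfolding D11_last_def fox_term_def
    using cells_Pmod[OF v i] S
    by (simp add: dPP_add dPP_diff dPP_tens_deg1 diag_add diag_diff Pmod_finite dS
        dmap_cells[OF v i] diag_cells[OF v i] fox_partial_Suc[OF i(1)] tens_linear fox_term_def rel)
qed

lemma sum_regroup_last:
  fixes a b c d :: "nat \<Rightarrow> 'a::ab_group_add"
  assumes "1 \<le> n"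
  shows "(\<Sum>i=1..n. a i) - (\<Sum>i\<in>{1..<n}. b i) + (\<Sum>i=1..n. c i) - (\<Sum>i\<in>{1..<n}. d i) - e
      = (\<Sum>i\<in>{1..<n}. a i - b i + c i - d i) + (a n + c n - e)"
proof -
  have "{1..n} = insert n {1..<n}" using assms by auto
  then show ?thesis by (simp add: sum.distrib sum_subtractf algebra_simps)
qed

lemma sum_telescope_Ico:
  fixes F G H :: "nat \<Rightarrow> 'a::ab_group_add"
  assumes "1 \<le> n"
  shows "(\<Sum>i\<in>{1..<n}. F i - F (Suc i) - G i + H i) = F 1 - F n - (\<Sum>i\<in>{1..<n}. G i) + (\<Sum>i\<in>{1..<n}. H i)"
  using sum_Suc_diff'[OF assms, of F] by (simp add: sum.distrib sum_subtractf algebra_simps)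

lemma tens_fox_partial:
  "(\<Sum>j\<in>{1..<i}. tens (y_q n v j - y_c n v j) y + tens (z_a n v j - z_p n v j) y) = tens (fox_partial n v i) y"
  by (simp add: fox_partial_def fox_term_def tens_sum_left tens_linear algebra_simps)

context
  fixes n :: nat and v :: word
  assumes v: "v \<in> words n" and n: "1 \<le> n"
begin

lemma act_Delta11_cells:
  "Suc 0 \<le> i \<Longrightarrow> i \<le> n \<Longrightarrow> act n (cls n v) (ev n (pw (i - Suc 0)) (Y i)) = y_q n v i"
  "Suc 0 \<le> i \<Longrightarrow> i \<le> n \<Longrightarrow> act n (cls n v) (ev n (pw (i - Suc 0) @ [la i, lb i, lai i]) (Y i)) = y_c n v i"
  "Suc 0 \<le> i \<Longrightarrow> i \<le> n \<Longrightarrow> act n (cls n v) (ev n (pw (i - Suc 0) @ [la i]) (Z i)) = z_a n v i"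
  "i \<le> n \<Longrightarrow> act n (cls n v) (ev n (pw i) (Z i)) = z_p n v i"
  "Suc 0 \<le> i \<Longrightarrow> i \<le> n \<Longrightarrow> act n (cls n v) (Aterm n i) = y_q n v i - y_c n v i"
  "Suc 0 \<le> i \<Longrightarrow> i \<le> n \<Longrightarrow> act n (cls n v) (Bterm n i) = z_a n v i - z_p n v i"
  using v pw_snoc_comm[of i] by (simp_all add: act_ev act_diff cell_defs Aterm_def Bterm_def)

lemma act_Delta11_last:
  "act n (cls n v) (ev n [] (Z n)) = z_p n v n"
  "act n (cls n v) (ev n [lb n] (Y n)) = y_c n v n"
proof -
  show "act n (cls n v) (ev n [] (Z n)) = z_p n v n"
    using v n cls_relator[of v n "[]"] by (simp add: act_ev) (simp add: z_p_def ev_def)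
  have "cls n (v @ pw (n - 1) @ [la n, lb n, lai n])
      = cls n (v @ pw (n - 1) @ [la n, lb n, lai n, lbi n, lb n])"
    using cls_cancel[of "v @ pw (n - 1) @ [la n, lb n, lai n]" n "[]" "lbi n"] v n by simp
  also have "\<dots> = cls n (v @ pw n @ [lb n])" using pw_snoc_comm[OF n] by simp
  also have "\<dots> = cls n (v @ [lb n])" using cls_relator[of v n "[lb n]"] v n by simp
  finally show "act n (cls n v) (ev n [lb n] (Y n)) = y_c n v n"
    using v n by (simp add: act_ev) (simp add: y_c_def ev_def)
qed

lemma act2_Delta11: "act2 n (cls n v) (Delta11 n) = (\<Sum>i\<in>{1..<n}. D11_block n v i) + D11_last n v"
proof -
  have "act2 n (cls n v) (Delta11 n) =
      (\<Sum>i=1..n. \<Sum>j\<in>{1..<i}. tens (y_q n v j - y_c n v j) (y_q n v i) + tens (z_a n v j - z_p n v j) (y_q n v i))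
    - (\<Sum>i\<in>{1..<n}. (\<Sum>j\<in>{1..<i}. tens (y_q n v j - y_c n v j) (y_c n v i) + tens (z_a n v j - z_p n v j) (y_c n v i))
         + tens (y_q n v i - y_c n v i) (y_c n v i) + tens (z_a n v i) (y_c n v i))
    + (\<Sum>i=1..n. (\<Sum>j\<in>{1..<i}. tens (y_q n v j - y_c n v j) (z_a n v i) + tens (z_a n v j - z_p n v j) (z_a n v i))
         + tens (y_q n v i) (z_a n v i))
    - (\<Sum>i\<in>{1..<n}. \<Sum>j\<in>{1..<Suc i}. tens (y_q n v j - y_c n v j) (z_p n v i) + tens (z_a n v j - z_p n v j) (z_p n v i))
    - tens (z_p n v n) (y_c n v n)"
    unfolding Delta11_def atLeastLessThanSuc_atLeastAtMost
    by (simp add: act2_add act2_diff act2_sum act2_tens act_diff act_Delta11_cells act_Delta11_last)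
  also have "\<dots> = (\<Sum>i\<in>{1..<n}. D11_block n v i) + D11_last n v"
    unfolding tens_fox_partial D11_block_def D11_last_def by (rule sum_regroup_last[OF n])
  finally show ?thesis .
qed

end

lemma diag_cell_W:
  assumes v: "v \<in> words n" and n: "1 \<le> n"
  shows "diag_cell n (cls n v, W) = tens (ev n v W) (x_ab n v n) + tens (x_q n v 1) (ev n v W)
    + ((\<Sum>i\<in>{1..<n}. D11_block n v i) + D11_last n v)"
proof -
  have "pw (n - 1) @ [la n, lb n] \<in> words n" using n by simp
  then show ?thesis
    using v Delta11_PPbideg[OF n]
    by (simp add: diag_cell_def act2_add act2_tens act_ev PPbideg_def act2_Delta11[OF v n]
        x_ab_def x_q_def)
qed

lemma dPP_diag_cell_W:
  assumes v: "v \<in> words n" and n: "1 \<le> n"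
  shows "dPP n (diag_cell n (cls n v, W)) = diag n (dP n (cls n v, W))"
proof -
  let ?S = "fox_partial n v" and ?F = "\<lambda>i. tens (fox_partial n v i) (x_q n v i)"
  have dW: "dmap n (ev n v W) = ?S (Suc n)" by (simp only: dmap_ev dP_W[OF v])
  have blocks: "(\<Sum>i\<in>{1..<n}. dPP n (D11_block n v i))
      = - ?F n - tens (x_q n v 1) (?S n) + diag n (?S n)"
  proof -
    have "(\<Sum>i\<in>{1..<n}. dPP n (D11_block n v i))
        = (\<Sum>i\<in>{1..<n}. ?F i - ?F (Suc i) - tens (x_q n v 1) (fox_term n v i) + diag n (fox_term n v i))"
      using v n by (intro sum.cong refl) (simp add: dPP_D11_block)
    also have "\<dots> = ?F 1 - ?F n - (\<Sum>i\<in>{1..<n}. tens (x_q n v 1) (fox_term n v i))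
        + (\<Sum>i\<in>{1..<n}. diag n (fox_term n v i))"
      by (rule sum_telescope_Ico[OF n])
    also have "\<dots> = - ?F n - tens (x_q n v 1) (?S n) + diag n (?S n)"
      by (simp add: fox_partial_def tens_sum_right diag_sum)
    finally show ?thesis .
  qed
  have "dPP n (diag_cell n (cls n v, W)) = tens (?S (Suc n)) (x_ab n v n) + tens (x_q n v 1) (?S (Suc n))
      + (\<Sum>i\<in>{1..<n}. dPP n (D11_block n v i)) + dPP n (D11_last n v)"
    unfolding diag_cell_W[OF v n]
    using v cells_Pmod(5)[OF v order.refl n]
    by (simp add: dPP_add dPP_sum dPP_tens_even[of "ev n v W" n 2] dPP_tens_even[of "x_q n v (Suc 0)" n 0] dW)
  also have "\<dots> = diag n (?S (Suc n))"
  proof -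
    have "tens (x_q n v 1) (?S (Suc n)) = tens (x_q n v 1) (?S n) + tens (x_q n v 1) (fox_term n v n)"
      and "diag n (?S (Suc n)) = diag n (?S n) + diag n (fox_term n v n)"
      by (simp_all add: fox_partial_Suc[OF n] tens_add_right diag_add)
    then show ?thesis unfolding blocks dPP_D11_last[OF v n] by (simp add: algebra_simps)
  qed
  finally show ?thesis by (simp only: dP_W[OF v])
qed

lemma dPP_diag_cell_YZ:
  assumes v: "v \<in> words n" and i: "1 \<le> i" "i \<le> n"
  shows "dPP n (diag_cell n (cls n v, Y i)) = diag n (dP n (cls n v, Y i))"
    and "dPP n (diag_cell n (cls n v, Z i)) = diag n (dP n (cls n v, Z i))"
proof -
  have w: "[la i] \<in> words n" "[lb i] \<in> words n" using i by simp_all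
  have diag_X: "diag n (ev n u X) = tens (ev n u X) (ev n u X)" if "u \<in> words n" for u
    using that diag_cell_X[of "cls n u" n] by (simp only: diag_ev) (simp add: tens_bv ev_def)
  have X0: "ev n v X \<in> Pmod n 0" using v by simp
  show "dPP n (diag_cell n (cls n v, Y i)) = diag n (dP n (cls n v, Y i))"
    unfolding diag_ev [symmetric] dmap_ev [symmetric] diag_ev_Y[OF v i v] dmap_ev_Y[OF v i v]
    using v w by (simp add: dPP_add dPP_tens_deg1 dPP_tens_even[OF X0] dmap_ev_Y[OF v i v] dmap_ev_X diag_diff
        diag_X tens_linear)
  show "dPP n (diag_cell n (cls n v, Z i)) = diag n (dP n (cls n v, Z i))"
    unfolding diag_ev [symmetric] dmap_ev [symmetric] diag_ev_Z[OF v i v] dmap_ev_Z[OF v i v]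
    using v w by (simp add: dPP_add dPP_tens_deg1 dPP_tens_even[OF X0] dmap_ev_Z[OF v i v] dmap_ev_X diag_diff
        diag_X tens_linear)
qed

lemma dPP_diag_cell:
  assumes n: "1 \<le> n" and c: "c \<in> cells n r" and r: "1 \<le> r"
  shows "dPP n (diag_cell n c) = diag n (dP n c)"
proof -
  obtain v e where v: "v \<in> words n" and ce: "c = (cls n v, e)"
    using c by (cases c) (auto simp: cells_iff elim!: GcarE)
  show ?thesis
  proof (cases e)
    case X then show ?thesis using c r ce by (simp add: cells_iff)
  next
    case (Y i) then show ?thesis using c ce dPP_diag_cell_YZ(1)[OF v] by (simp add: cells_iff)
  next
    case (Z i) then show ?thesis using c ce dPP_diag_cell_YZ(2)[OF v] by (simp add: cells_iff)
  next
    case W then show ?thesis using ce dPP_diag_cell_W[OF v n] by simp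
  qed
qed

lemma dPP_diag:
  assumes n: "1 \<le> n" and f: "f \<in> Pmod n r" and r: "1 \<le> r"
  shows "dPP n (diag n f) = diag n (dmap n f)"
proof -
  have ff: "finite (supp f)" and cf: "\<And>c. c \<in> supp f \<Longrightarrow> c \<in> cells n r"
    using f by (auto simp: Pmod_iff)
  have "dPP n (diag n f) = lext f (\<lambda>c. dPP n (diag_cell n c))"
    unfolding dPP_eq_lext diag_def
    by (rule lext_lext[OF ff]) (rule PPmod_finite[OF diag_cell_PPmod[OF n cf]])
  also have "\<dots> = lext f (\<lambda>c. diag n (dP n c))"
    by (rule lext_cong) (simp add: dPP_diag_cell[OF n cf r])
  also have "\<dots> = diag n (dmap n f)"
    unfolding diag_def dmap_def by (rule lext_lext[OF ff, symmetric]) simp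
  finally show ?thesis .
qed

lemma proj_add: "proj r s (F + G) = proj r s F + proj r s G"
  by (auto simp: proj_def fun_eq_iff)

lemma proj_PPbideg:
  assumes "F \<in> PPbideg n r' s'"
  shows "proj r s F = (if r' = r \<and> s' = s then F else 0)"
proof (rule ext, clarify)
  fix c c'
  show "proj r s F (c, c') = (if r' = r \<and> s' = s then F else 0) (c, c')"
  proof (cases "F (c, c') = 0")
    case False
    then have "c \<in> cells n r'" "c' \<in> cells n s'" using assms by (auto simp: PPbideg_def supp_def)
    then show ?thesis by (auto simp: proj_def cells_iff)
  qed (simp add: proj_def)
qed

lemma proj_diag_W:
  assumes n: "1 \<le> n"
  shows "proj 0 2 (diag n (ev n [] W)) = tens (ev n [] X) (ev n [] W)"
    and "proj 1 1 (diag n (ev n [] W)) = Delta11 n"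
proof -
  have "pw (n - 1) @ [la n, lb n] \<in> words n" using n by simp
  then have "tens (ev n [] W) (ev n (pw (n - 1) @ [la n, lb n]) X) \<in> PPbideg n 2 0"
    and "tens (ev n [] X) (ev n [] W) \<in> PPbideg n 0 2"
    by simp_all
  note parts = proj_PPbideg[OF this(1)] proj_PPbideg[OF this(2)] proj_PPbideg[OF Delta11_PPbideg[OF n]]
  show "proj 0 2 (diag n (ev n [] W)) = tens (ev n [] X) (ev n [] W)"
    and "proj 1 1 (diag n (ev n [] W)) = Delta11 n"
    using n by (simp_all add: diag_ev_Nil proj_add parts del: One_nat_def)
qed

theorem mainTheorem2:
  fixes n :: nat
  assumes "n \<ge> 1"
  shows "\<exists>D0 D1 D2. diag_approx n D0 D1 D2 \<and>
     D0 (ev n [] X) = tens (ev n [] X) (ev n [] X) \<and>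
     (\<forall>i\<in>{1..n}. D1 (ev n [] (Y i)) = tens (ev n [] (Y i)) (ev n [la i] X) + tens (ev n [] X) (ev n [] (Y i))) \<and>
     (\<forall>i\<in>{1..n}. D1 (ev n [] (Z i)) = tens (ev n [] (Z i)) (ev n [lb i] X) + tens (ev n [] X) (ev n [] (Z i))) \<and>
     proj 0 2 (D2 (ev n [] W)) = tens (ev n [] X) (ev n [] W) \<and>
     proj 1 1 (D2 (ev n [] W)) = Delta11 n"
proof (intro exI conjI)
  show "diag_approx n (diag n) (diag n) (diag n)"
    unfolding diag_approx_def using ZG_linear_diag[OF assms] dPP_diag[OF assms] diag_eps by auto
qed (use diag_ev_Nil[OF assms] proj_diag_W[OF assms] in simp_all)

end
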